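(* Let $G$ be a finite abstract simplicial complex and let $V=\{x\in G : |x|=1\}$. Then, as polynomials in $t$, $$ f_G(t)-1 = \sum_{v \in V} F_{S(v)}(t). $$
   Context: A finite abstract simplicial complex is a finite set of non-empty finite sets closed under taking non-empty subsets. For a complex $H$ of maximal dimension $d$ (maximal $|x|-1$), $f_k(H)$ is the number of elements of $H$ of cardinality $k+1$, and $f_H(t)=1+\sum_{k=0}^{d} f_k(H)\,t^{k+1}$ (so $f_H(t)=1$ for the empty complex); $F_H(t)=\int_0^t f_H(s)\,ds$. For $x\in G$: $U(x)=\{y\in G: x\subset y\}$, $B(x)=\{y\in G : y\subset z \text{ for some } z\in U(x)\}$, and the unit sphere $S(x)=B(x)\setminus U(x)$, which is again a simplicial complex. *)

theory Defs
  imports "HOL-Computational_Algebra.Polynomial"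
begin

definition simplicial_complex :: "'a set set \<Rightarrow> bool" where
  "simplicial_complex G \<longleftrightarrow> finite G \<and>
     (\<forall>x\<in>G. x \<noteq> {} \<and> finite x \<and> (\<forall>y. y \<noteq> {} \<and> y \<subseteq> x \<longrightarrow> y \<in> G))"

definition sc_dim :: "'a set set \<Rightarrow> nat" where
  "sc_dim H = Max ((\<lambda>x. card x - 1) ` H)"

definition fnum :: "'a set set \<Rightarrow> nat \<Rightarrow> nat" where
  "fnum H k = card {x\<in>H. card x = k + 1}"

definition f_poly :: "'a set set \<Rightarrow> real poly" where
  "f_poly H = (if H = {} then 1
     else 1 + (\<Sum>k\<le>sc_dim H. monom (of_nat (fnum H k)) (k + 1)))"

definition poly_integral :: "real poly \<Rightarrow> real poly" where
  "poly_integral p = (\<Sum>i\<le>degree p. monom (coeff p i / of_nat (i + 1)) (i + 1))"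

definition F_poly :: "'a set set \<Rightarrow> real poly" where
  "F_poly H = poly_integral (f_poly H)"

definition U_set :: "'a set set \<Rightarrow> 'a set \<Rightarrow> 'a set set" where
  "U_set G x = {y\<in>G. x \<subseteq> y}"

definition B_set :: "'a set set \<Rightarrow> 'a set \<Rightarrow> 'a set set" where
  "B_set G x = {y\<in>G. \<exists>z\<in>U_set G x. y \<subseteq> z}"

definition unit_sphere :: "'a set set \<Rightarrow> 'a set \<Rightarrow> 'a set set" where
  "unit_sphere G x = B_set G x - U_set G x"

end

theory Submission
  imports Defs
begin

text \<open>Integrating term by term, \<open>F\<^bsub>S(a)\<^esub>(t)\<close> is the sum of \<open>t\<^bsup>|x|\<^esup> / |x|\<close> over
  the faces \<open>x\<close> containing the vertex \<open>a\<close>: the face \<open>{a}\<close> gives the constant term of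
  \<open>f\<^bsub>S(a)\<^esub>\<close>, and \<open>x \<mapsto> x - {a}\<close> maps the other faces containing \<open>a\<close> bijectively
  onto \<open>S(a)\<close>. Summing over all vertices counts every face \<open>x\<close> exactly \<open>|x|\<close> times,
  which leaves \<open>\<Sum>\<^sub>x t\<^bsup>|x|\<^esup> = f\<^bsub>G\<^esub>(t) - 1\<close>.\<close>

lemma coeff_poly_integral:
  "coeff (poly_integral p) n = (if n = 0 then 0 else coeff p (n - 1) / of_nat n)"
proof (cases n)
  case (Suc m)
  have "coeff (poly_integral p) n = (\<Sum>i\<le>degree p. if i = m then coeff p m / of_nat n else 0)"
    unfolding poly_integral_def coeff_sum coeff_monom using Suc by (intro sum.cong) auto
  also have "\<dots> = coeff p m / of_nat n"
    by (simp add: coeff_eq_0 not_le)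
  finally show ?thesis using Suc by simp
qed (simp add: poly_integral_def coeff_sum)

lemma poly_integral_add: "poly_integral (p + q) = poly_integral p + poly_integral q"
  by (rule poly_eqI) (simp add: coeff_poly_integral add_divide_distrib)

lemma poly_integral_sum:
  "finite A \<Longrightarrow> poly_integral (\<Sum>x\<in>A. f x) = (\<Sum>x\<in>A. poly_integral (f x))"
  by (induction A rule: finite_induct) (simp_all add: poly_integral_add poly_eqI coeff_poly_integral)

lemma poly_integral_monom: "poly_integral (monom c n) = monom (c / of_nat (n + 1)) (n + 1)"
  by (rule poly_eqI) (auto simp: coeff_poly_integral)

lemma of_nat_mult_monom: "of_nat m * monom (c :: 'a :: comm_semiring_1) n = monom (of_nat m * c) n"
  by (simp add: of_nat_monom mult_monom)

lemma f_poly_eq_sum_monom: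
  assumes "finite H" and "\<And>x. x \<in> H \<Longrightarrow> x \<noteq> {} \<and> finite x"
  shows "f_poly H = 1 + (\<Sum>x\<in>H. monom 1 (card x))"
proof (cases "H = {}")
  case False
  have fibre: "{x\<in>H. card x - 1 = k} = {x\<in>H. card x = k + 1}" for k
  proof -
    have "card x > 0" if "x \<in> H" for x using assms(2)[OF that] by (simp add: card_gt_0_iff)
    then show ?thesis by fastforce
  qed
  have "(\<Sum>x\<in>H. monom 1 (card x) :: real poly)
      = (\<Sum>k\<le>sc_dim H. \<Sum>x\<in>{x\<in>H. card x - 1 = k}. monom 1 (card x))"
    by (rule sum.group[symmetric]) (use assms(1) False in \<open>auto simp: sc_dim_def\<close>)
  also have "\<dots> = (\<Sum>k\<le>sc_dim H. \<Sum>x\<in>{x\<in>H. card x = k + 1}. monom 1 (k + 1))"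
    unfolding fibre by (intro sum.cong) auto
  also have "\<dots> = (\<Sum>k\<le>sc_dim H. monom (of_nat (fnum H k)) (k + 1))"
    by (simp add: fnum_def of_nat_mult_monom)
  finally show ?thesis using False by (simp add: f_poly_def)
qed (simp add: f_poly_def)

lemma simplicial_complex_finite: "simplicial_complex G \<Longrightarrow> finite G"
  by (simp add: simplicial_complex_def)

lemma simplicial_complex_face:
  "simplicial_complex G \<Longrightarrow> x \<in> G \<Longrightarrow> x \<noteq> {} \<and> finite x"
  by (simp add: simplicial_complex_def)

lemma simplicial_complex_subface:
  "simplicial_complex G \<Longrightarrow> x \<in> G \<Longrightarrow> y \<noteq> {} \<Longrightarrow> y \<subseteq> x \<Longrightarrow> y \<in> G"
  unfolding simplicial_complex_def by blast

lemma simplicial_complex_vertices: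
  assumes "simplicial_complex G"
  shows "{x\<in>G. card x = 1} = (\<lambda>a. {a}) ` \<Union>G"
  using simplicial_complex_subface[OF assms] by (auto simp: card_1_singleton_iff)

lemma F_poly_eq_sum_monom:
  assumes "finite H" and "\<And>x. x \<in> H \<Longrightarrow> x \<noteq> {} \<and> finite x"
  shows "F_poly H = monom 1 1 + (\<Sum>y\<in>H. monom (1 / of_nat (card y + 1)) (card y + 1))"
  using poly_integral_monom[of 1 0]
  by (simp add: F_poly_def f_poly_eq_sum_monom[OF assms] poly_integral_add
      poly_integral_sum[OF assms(1)] poly_integral_monom)

lemma mem_unit_sphere_vertex:
  assumes "simplicial_complex G"
  shows "y \<in> unit_sphere G {a} \<longleftrightarrow> y \<in> G \<and> a \<notin> y \<and> insert a y \<in> G"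
  using simplicial_complex_subface[OF assms, of _ "insert a y"]
  by (auto simp: unit_sphere_def B_set_def U_set_def)

lemma faces_containing_vertex:
  assumes "simplicial_complex G" and "{a} \<in> G"
  shows "{x\<in>G. a \<in> x} = insert {a} (insert a ` unit_sphere G {a})"
proof (intro equalityI subsetI)
  fix x assume x: "x \<in> {x\<in>G. a \<in> x}"
  show "x \<in> insert {a} (insert a ` unit_sphere G {a})"
  proof (cases "x = {a}")
    case False
    with x have "x - {a} \<noteq> {}" by auto
    then have "x - {a} \<in> unit_sphere G {a}"
      using x simplicial_complex_subface[OF assms(1), of x "x - {a}"]
      by (auto simp: mem_unit_sphere_vertex[OF assms(1)] insert_absorb)
    then show ?thesis using x by (auto intro!: image_eqI[of x _ "x - {a}"])
  qed simp
qed (use assms in \<open>auto simp: mem_unit_sphere_vertex\<close>)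

lemma sum_faces_by_vertices:
  assumes "simplicial_complex G"
  shows "(\<Sum>x\<in>G. monom 1 (card x) :: real poly)
       = (\<Sum>a\<in>\<Union>G. \<Sum>x\<in>{x\<in>G. a \<in> x}. monom (1 / of_nat (card x)) (card x))"
proof -
  have fin: "finite G" "finite (\<Union>G)"
    using simplicial_complex_finite[OF assms] simplicial_complex_face[OF assms] by auto
  have "(\<Sum>x\<in>G. monom 1 (card x) :: real poly)
      = (\<Sum>x\<in>G. \<Sum>a\<in>{a\<in>\<Union>G. a \<in> x}. monom (1 / of_nat (card x)) (card x))"
  proof (intro sum.cong refl)
    fix x assume x: "x \<in> G"
    have "card x > 0" using simplicial_complex_face[OF assms x] by (simp add: card_gt_0_iff)
    moreover have "{a\<in>\<Union>G. a \<in> x} = x" using x by blast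
    ultimately show "(monom 1 (card x) :: real poly)
        = (\<Sum>a\<in>{a\<in>\<Union>G. a \<in> x}. monom (1 / of_nat (card x)) (card x))"
      by (simp add: of_nat_mult_monom)
  qed
  also have "\<dots> = (\<Sum>a\<in>\<Union>G. \<Sum>x\<in>{x\<in>G. a \<in> x}. monom (1 / of_nat (card x)) (card x))"
    by (rule sum.swap_restrict[OF fin(2,1), symmetric])
  finally show ?thesis .
qed

lemma F_poly_unit_sphere_vertex:
  assumes "simplicial_complex G" and "{a} \<in> G"
  shows "F_poly (unit_sphere G {a}) = (\<Sum>x\<in>{x\<in>G. a \<in> x}. monom (1 / of_nat (card x)) (card x))"
proof -
  define S where "S = unit_sphere G {a}"
  have S: "y \<in> G" "a \<notin> y" "y \<noteq> {}" "finite y" if "y \<in> S" for y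
    using that simplicial_complex_face[OF assms(1)]
    unfolding S_def mem_unit_sphere_vertex[OF assms(1)] by auto
  have fin: "finite S"
    using S simplicial_complex_finite[OF assms(1)] by (meson finite_subset subsetI)
  have "(\<Sum>x\<in>{x\<in>G. a \<in> x}. monom (1 / of_nat (card x)) (card x) :: real poly)
      = monom 1 1 + (\<Sum>x\<in>insert a ` S. monom (1 / of_nat (card x)) (card x))"
  proof -
    have "{a} \<notin> insert a ` S" using S(2,3) by (auto simp: subset_singleton_iff)
    then show ?thesis unfolding faces_containing_vertex[OF assms] S_def[symmetric] using fin by simp
  qed
  also have "\<dots> = monom 1 1 + (\<Sum>y\<in>S. monom (1 / of_nat (card y + 1)) (card y + 1))"
  proof -
    have "inj_on (insert a) S" by (rule inj_onI) (metis S(2) insert_ident)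
    then show ?thesis using S by (simp add: sum.reindex)
  qed
  also have "\<dots> = F_poly S"
    using F_poly_eq_sum_monom[OF fin] S by simp
  finally show ?thesis unfolding S_def ..
qed

theorem mainTheorem8:
  fixes G :: "'a set set"
  assumes "simplicial_complex G"
  shows "f_poly G - 1 = (\<Sum>v\<in>{x\<in>G. card x = 1}. F_poly (unit_sphere G v))"
proof -
  have "f_poly G - 1 = (\<Sum>x\<in>G. monom 1 (card x))"
    by (simp add: f_poly_eq_sum_monom simplicial_complex_finite[OF assms]
        simplicial_complex_face[OF assms])
  also have "\<dots> = (\<Sum>a\<in>\<Union>G. F_poly (unit_sphere G {a}))"
    unfolding sum_faces_by_vertices[OF assms]
    using F_poly_unit_sphere_vertex[OF assms] simplicial_complex_subface[OF assms]
    by (intro sum.cong) auto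
  also have "\<dots> = (\<Sum>v\<in>(\<lambda>a. {a}) ` \<Union>G. F_poly (unit_sphere G v))"
    by (simp add: sum.reindex)
  finally show ?thesis unfolding simplicial_complex_vertices[OF assms] .
qed

end
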